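(* Let $\mathcal{H}$ be a complex Hilbert space. If $T\in\mathbb{B}(\mathcal{H})$ is normal, then $\Omega(T) = \sqrt{2}\|T\|$.
   Context: $\mathbb{B}(\mathcal{H})$ is the algebra of bounded linear operators on $\mathcal{H}$ and $\|\cdot\|$ the usual operator norm. Dragomir's norm is $\Omega(T)=\sup\{\|\zeta T+\eta T^*\|:\ \zeta,\eta\in\mathbb{C},\ |\zeta|^2+|\eta|^2\le 1\}$. *)

theory Defs
  imports "HOL-Analysis.Analysis"
begin

class complex_inner = real_normed_vector +
  fixes scaleC :: "complex \<Rightarrow> 'a \<Rightarrow> 'a"
    and cinner :: "'a \<Rightarrow> 'a \<Rightarrow> complex"
  assumes scaleC_add_right: "scaleC a (x + y) = scaleC a x + scaleC a y"
    and scaleC_add_left: "scaleC (a + b) x = scaleC a x + scaleC b x"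
    and scaleC_scaleC: "scaleC a (scaleC b x) = scaleC (a * b) x"
    and scaleC_one: "scaleC 1 x = x"
    and scaleR_scaleC: "scaleR r x = scaleC (complex_of_real r) x"
    and cinner_commute: "cinner x y = cnj (cinner y x)"
    and cinner_add_right: "cinner x (y + z) = cinner x y + cinner x z"
    and cinner_scaleC_right: "cinner x (scaleC a y) = a * cinner x y"
    and cinner_ge_zero: "0 \<le> Re (cinner x x)"
    and norm_eq_sqrt_cinner: "norm x = sqrt (Re (cinner x x))"

class chilbert_space = complex_inner + complete_space

definition bounded_clinear :: "('a::complex_inner \<Rightarrow> 'a) \<Rightarrow> bool" where
  "bounded_clinear T \<longleftrightarrow>
     (\<forall>x y. T (x + y) = T x + T y) \<and>
     (\<forall>c x. T (scaleC c x) = scaleC c (T x)) \<and>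
     (\<exists>K. \<forall>x. norm (T x) \<le> norm x * K)"

definition is_adjoint :: "('a::complex_inner \<Rightarrow> 'a) \<Rightarrow> ('a \<Rightarrow> 'a) \<Rightarrow> bool" where
  "is_adjoint T S \<longleftrightarrow> (\<forall>x y. cinner (T x) y = cinner x (S y))"

text \<open>Dragomir's norm \<Omega>(T), where S = T*. The operator norm is the library's onorm.\<close>
definition dragomir_norm :: "('a::complex_inner \<Rightarrow> 'a) \<Rightarrow> ('a \<Rightarrow> 'a) \<Rightarrow> real" where
  "dragomir_norm T S =
     Sup {onorm (\<lambda>x. scaleC \<zeta> (T x) + scaleC \<eta> (S x)) | \<zeta> \<eta>.
            (cmod \<zeta>)\<^sup>2 + (cmod \<eta>)\<^sup>2 \<le> 1}"

end

theory Submission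
  imports Defs
begin

(* For any T with adjoint T^*, ||T^* x|| <= ||T|| ||x||, hence
   ||zeta T + eta T^*|| <= (|zeta| + |eta|) ||T|| <= sqrt 2 ||T||.
   Conversely, for a unit vector x and a = <x, T x> /= 0, the choice zeta = cnj a / (sqrt 2 |a|),
   eta = a / (sqrt 2 |a|) gives <x, zeta T x + eta T^* x> = sqrt 2 |a|, so Omega(T) is at least
   sqrt 2 times the numerical radius of T.
   For normal T the numerical radius is ||T||, because ||T|| cnj d is an eigenvalue up to any
   error e > 0 for some |d| = 1. Normality makes k |-> ||T^k y|| log-convex, so for a unit
   vector y almost attaining ||T|| the vectors u_k = T^k y / ||T||^k have norm at most 1, and at
   least 1/2 for k < n. By Parseval's identity for the discrete Fourier transform some
   v = sum_{k<n} d^k u_k with |d| = 1 has ||v||^2 >= n/4, while T v - ||T|| cnj d v telescopes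
   to a vector of norm at most 2 ||T||. *)

section \<open>Complex inner product spaces\<close>

lemma cnj_mult_self: "cnj z * z = complex_of_real ((cmod z)\<^sup>2)"
  by (metis complex_norm_square mult.commute)

lemma additive_cinner_right: "Modules.additive (cinner (x::'a::complex_inner))"
  by standard (rule cinner_add_right)

lemma cinner_add_left:
  fixes x y z :: "'a::complex_inner"
  shows "cinner (x + y) z = cinner x z + cinner y z"
  by (metis cinner_commute cinner_add_right complex_cnj_add)

lemma additive_cinner_left: "Modules.additive (\<lambda>x::'a::complex_inner. cinner x y)"
  by standard (rule cinner_add_left)

lemma additive_scaleC_right: "Modules.additive (scaleC a :: 'a::complex_inner \<Rightarrow> 'a)"
  by standard (rule scaleC_add_right)

lemma cinner_scaleC_left:
  fixes x y :: "'a::complex_inner"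
  shows "cinner (scaleC a x) y = cnj a * cinner x y"
  by (metis cinner_commute cinner_scaleC_right complex_cnj_mult)

lemma cinner_self_eq_norm_square:
  fixes x :: "'a::complex_inner"
  shows "cinner x x = complex_of_real ((norm x)\<^sup>2)"
proof -
  have "Im (cinner x x) = 0"
    using arg_cong[OF cinner_commute[of x x], of Im] by simp
  moreover have "Re (cinner x x) = (norm x)\<^sup>2"
    using norm_eq_sqrt_cinner[of x] cinner_ge_zero[of x] by simp
  ultimately show ?thesis
    by (simp add: complex_eq_iff)
qed

lemma power2_norm_eq_Re_cinner:
  fixes x :: "'a::complex_inner"
  shows "(norm x)\<^sup>2 = Re (cinner x x)"
  by (simp add: cinner_self_eq_norm_square)

lemma norm_scaleC:
  fixes x :: "'a::complex_inner"
  shows "norm (scaleC a x) = cmod a * norm x"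
proof -
  have "cinner (scaleC a x) (scaleC a x) = cnj a * a * cinner x x"
    by (simp add: cinner_scaleC_left cinner_scaleC_right mult.assoc)
  also have "\<dots> = complex_of_real ((cmod a * norm x)\<^sup>2)"
    by (simp add: cnj_mult_self cinner_self_eq_norm_square power_mult_distrib)
  finally have "(norm (scaleC a x))\<^sup>2 = (cmod a * norm x)\<^sup>2"
    by (simp add: power2_norm_eq_Re_cinner)
  then show ?thesis
    by (simp add: power2_eq_iff_nonneg)
qed

lemma power2_norm_add:
  fixes x y :: "'a::complex_inner"
  shows "(norm (x + y))\<^sup>2 = (norm x)\<^sup>2 + 2 * Re (cinner x y) + (norm y)\<^sup>2"
proof -
  have "Re (cinner y x) = Re (cinner x y)"
    by (subst cinner_commute) simp
  then show ?thesis
    by (simp add: power2_norm_eq_Re_cinner cinner_add_left cinner_add_right)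
qed

lemma Re_cinner_le_norm:
  fixes x y :: "'a::complex_inner"
  shows "Re (cinner x y) \<le> norm x * norm y"
proof -
  have "(norm (x + y))\<^sup>2 \<le> (norm x + norm y)\<^sup>2"
    by (simp add: power_mono norm_triangle_ineq)
  then show ?thesis
    by (simp add: power2_norm_add power2_sum)
qed

lemma cinner_Cauchy_Schwarz:
  fixes x y :: "'a::complex_inner"
  shows "cmod (cinner x y) \<le> norm x * norm y"
proof (cases "cinner x y = 0")
  case False
  define c where "c = cnj (cinner x y) / cmod (cinner x y)"
  have "cinner x (scaleC c y) = complex_of_real (cmod (cinner x y))"
    using False by (simp add: c_def cinner_scaleC_right cnj_mult_self power2_eq_square)
  moreover have "cmod c = 1"
    using False by (simp add: c_def norm_divide)
  ultimately show ?thesis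
    using Re_cinner_le_norm[of x "scaleC c y"] by (simp add: norm_scaleC)
qed simp

lemma cinner_eq_right_imp_eq:
  fixes a b :: "'a::complex_inner"
  assumes "\<And>w. cinner w a = cinner w b"
  shows "a = b"
proof -
  have "cinner (a - b) (a - b) = 0"
    using assms[of "a - b"] by (simp add: Modules.additive.diff[OF additive_cinner_right])
  then show ?thesis
    by (simp add: cinner_self_eq_norm_square)
qed

section \<open>Bounded operators, adjoints and Dragomir's norm\<close>

lemma bounded_clinear_additive: "bounded_clinear T \<Longrightarrow> Modules.additive T"
  by standard (simp add: bounded_clinear_def)

lemma bounded_clinear_scaleC: "bounded_clinear T \<Longrightarrow> T (scaleC c x) = scaleC c (T x)"
  by (simp add: bounded_clinear_def)

lemma bounded_clinear_imp_bounded_linear: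
  assumes "bounded_clinear T"
  shows "bounded_linear T"
proof -
  obtain K where "\<And>x. norm (T x) \<le> norm x * K"
    using assms by (auto simp: bounded_clinear_def)
  then show ?thesis
    using assms by (intro bounded_linear_intro[of _ K])
      (auto simp: bounded_clinear_def scaleR_scaleC)
qed

lemma norm_funpow_le:
  fixes T :: "'a::real_normed_vector \<Rightarrow> 'a"
  assumes "bounded_linear T"
  shows "norm ((T ^^ k) y) \<le> onorm T ^ k * norm y"
proof (induction k)
  case (Suc k)
  have "norm ((T ^^ Suc k) y) \<le> onorm T * norm ((T ^^ k) y)"
    using onorm[OF assms, of "(T ^^ k) y"] by simp
  also have "\<dots> \<le> onorm T * (onorm T ^ k * norm y)"
    using Suc.IH onorm_pos_le[OF assms] by (rule mult_left_mono)
  finally show ?case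
    by simp
qed simp

lemma onorm_approx_by_unit_vector:
  fixes T :: "'a::real_normed_vector \<Rightarrow> 'b::real_normed_vector"
  assumes "bounded_linear T" "0 \<le> t" "t < onorm T"
  shows "\<exists>y. norm y = 1 \<and> t < norm (T y)"
proof -
  interpret T: bounded_linear T by fact
  have "bdd_above (range (\<lambda>x. norm (T x) / norm x))"
    using le_onorm[OF assms(1)] by (rule bdd_aboveI2)
  then obtain x where x: "t < norm (T x) / norm x"
    using assms(3) by (auto simp: onorm_def less_cSUP_iff)
  then have "x \<noteq> 0"
    using assms(2) by auto
  then show ?thesis
    using x by (intro exI[of _ "x /\<^sub>R norm x"]) (simp add: T.scaleR divide_inverse_commute)
qed

lemma is_adjointD: "is_adjoint T S \<Longrightarrow> cinner x (S y) = cinner (T x) y"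
  by (simp add: is_adjoint_def)

lemma is_adjoint_additive:
  assumes "is_adjoint T S"
  shows "Modules.additive S"
proof
  show "S (x + y) = S x + S y" for x y
    by (rule cinner_eq_right_imp_eq) (simp add: is_adjointD[OF assms] cinner_add_right)
qed

lemma is_adjoint_scaleC:
  assumes "is_adjoint T S"
  shows "S (scaleC c x) = scaleC c (S x)"
  by (rule cinner_eq_right_imp_eq) (simp add: is_adjointD[OF assms] cinner_scaleC_right)

lemma is_adjoint_norm_le:
  assumes "bounded_linear T" "is_adjoint T S"
  shows "norm (S y) \<le> onorm T * norm y"
proof -
  have "(norm (S y))\<^sup>2 = Re (cinner (T (S y)) y)"
    by (simp add: power2_norm_eq_Re_cinner is_adjointD[OF assms(2)])
  also have "\<dots> \<le> norm (T (S y)) * norm y"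
    by (rule Re_cinner_le_norm)
  also have "\<dots> \<le> onorm T * norm (S y) * norm y"
    by (simp add: mult_right_mono onorm[OF assms(1)])
  finally have "norm (S y) * norm (S y) \<le> norm (S y) * (onorm T * norm y)"
    by (simp add: power2_eq_square ac_simps)
  then show ?thesis
    using onorm_pos_le[OF assms(1)] by (cases "S y = 0") auto
qed

lemma norm_adjoint_combination_le:
  fixes T S :: "'a::complex_inner \<Rightarrow> 'a" and \<zeta> \<eta> :: complex
  assumes "bounded_clinear T" "is_adjoint T S"
  shows "norm (scaleC \<zeta> (T x) + scaleC \<eta> (S x)) \<le> (cmod \<zeta> + cmod \<eta>) * onorm T * norm x"
proof -
  have T: "bounded_linear T"
    by (rule bounded_clinear_imp_bounded_linear[OF assms(1)])
  have "norm (scaleC \<zeta> (T x) + scaleC \<eta> (S x)) \<le> cmod \<zeta> * norm (T x) + cmod \<eta> * norm (S x)"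
    using norm_triangle_ineq[of "scaleC \<zeta> (T x)" "scaleC \<eta> (S x)"] by (simp add: norm_scaleC)
  also have "\<dots> \<le> cmod \<zeta> * (onorm T * norm x) + cmod \<eta> * (onorm T * norm x)"
    by (intro add_mono mult_left_mono onorm[OF T] is_adjoint_norm_le[OF T assms(2)]) auto
  finally show ?thesis
    by (simp add: algebra_simps)
qed

lemma bounded_linear_adjoint_combination:
  assumes "bounded_clinear T" "is_adjoint T S"
  shows "bounded_linear (\<lambda>x. scaleC \<zeta> (T x) + scaleC \<eta> (S x))"
proof (rule bounded_linear_intro)
  show "scaleC \<zeta> (T (x + y)) + scaleC \<eta> (S (x + y))
      = scaleC \<zeta> (T x) + scaleC \<eta> (S x) + (scaleC \<zeta> (T y) + scaleC \<eta> (S y))" for x y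
    by (simp add: Modules.additive.add[OF bounded_clinear_additive[OF assms(1)]]
        Modules.additive.add[OF is_adjoint_additive[OF assms(2)]] scaleC_add_right)
  show "scaleC \<zeta> (T (r *\<^sub>R x)) + scaleC \<eta> (S (r *\<^sub>R x))
      = r *\<^sub>R (scaleC \<zeta> (T x) + scaleC \<eta> (S x))" for r x
    by (simp add: scaleR_scaleC bounded_clinear_scaleC[OF assms(1)] is_adjoint_scaleC[OF assms(2)]
        scaleC_add_right scaleC_scaleC mult.commute)
  show "norm (scaleC \<zeta> (T x) + scaleC \<eta> (S x)) \<le> norm x * ((cmod \<zeta> + cmod \<eta>) * onorm T)" for x
    using norm_adjoint_combination_le[OF assms, where \<zeta>=\<zeta> and \<eta>=\<eta> and x=x] by (simp add: ac_simps)
qed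

lemma sum_le_sqrt2_if_sum_squares_le_1:
  fixes a b :: real
  assumes "a\<^sup>2 + b\<^sup>2 \<le> 1"
  shows "a + b \<le> sqrt 2"
proof (rule real_le_rsqrt)
  have "(a + b)\<^sup>2 \<le> 2 * (a\<^sup>2 + b\<^sup>2)"
    using sum_squares_bound[of a b] by (simp add: power2_sum)
  also have "\<dots> \<le> 2"
    using assms by simp
  finally show "(a + b)\<^sup>2 \<le> 2" .
qed

lemma onorm_adjoint_combination_le:
  assumes "bounded_clinear T" "is_adjoint T S" "(cmod \<zeta>)\<^sup>2 + (cmod \<eta>)\<^sup>2 \<le> 1"
  shows "onorm (\<lambda>x. scaleC \<zeta> (T x) + scaleC \<eta> (S x)) \<le> sqrt 2 * onorm T"
proof (rule onorm_bound)
  have sqrt2: "cmod \<zeta> + cmod \<eta> \<le> sqrt 2"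
    using assms(3) by (rule sum_le_sqrt2_if_sum_squares_le_1)
  show M0: "0 \<le> sqrt 2 * onorm T"
    by (simp add: onorm_pos_le[OF bounded_clinear_imp_bounded_linear[OF assms(1)]])
  fix x
  have "norm (scaleC \<zeta> (T x) + scaleC \<eta> (S x)) \<le> (cmod \<zeta> + cmod \<eta>) * onorm T * norm x"
    by (rule norm_adjoint_combination_le[OF assms(1,2)])
  also have "\<dots> \<le> sqrt 2 * onorm T * norm x"
    using sqrt2 M0 by (intro mult_right_mono) (auto simp: zero_le_mult_iff)
  finally show "norm (scaleC \<zeta> (T x) + scaleC \<eta> (S x)) \<le> sqrt 2 * onorm T * norm x" .
qed

lemma dragomir_norm_le:
  assumes "bounded_clinear T" "is_adjoint T S"
  shows "dragomir_norm T S \<le> sqrt 2 * onorm T"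
  unfolding dragomir_norm_def
  using onorm_adjoint_combination_le[OF assms] by (intro cSup_least) (auto intro!: exI[of _ 0])

lemma onorm_adjoint_combination_le_dragomir_norm:
  assumes "bounded_clinear T" "is_adjoint T S" "(cmod \<zeta>)\<^sup>2 + (cmod \<eta>)\<^sup>2 \<le> 1"
  shows "onorm (\<lambda>x. scaleC \<zeta> (T x) + scaleC \<eta> (S x)) \<le> dragomir_norm T S"
  unfolding dragomir_norm_def
proof (rule cSup_upper)
  show "bdd_above {onorm (\<lambda>x. scaleC \<zeta> (T x) + scaleC \<eta> (S x)) | \<zeta> \<eta>.
      (cmod \<zeta>)\<^sup>2 + (cmod \<eta>)\<^sup>2 \<le> 1}"
    using onorm_adjoint_combination_le[OF assms(1,2)]
    by (intro bdd_aboveI[where M = "sqrt 2 * onorm T"]) auto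
qed (use assms(3) in blast)

lemma dragomir_norm_nonneg:
  assumes "bounded_clinear T" "is_adjoint T S"
  shows "0 \<le> dragomir_norm T S"
  using onorm_adjoint_combination_le_dragomir_norm[OF assms, of 0 0]
    onorm_pos_le[OF bounded_linear_adjoint_combination[OF assms], of 0 0]
  by simp

lemma cinner_le_dragomir_norm:
  assumes "bounded_clinear T" "is_adjoint T S" "norm x = 1"
  shows "sqrt 2 * cmod (cinner x (T x)) \<le> dragomir_norm T S"
proof (cases "cinner x (T x) = 0")
  case True
  then show ?thesis
    using dragomir_norm_nonneg[OF assms(1,2)] by simp
next
  case False
  define \<alpha> where "\<alpha> = cinner x (T x)"
  have \<alpha>0: "\<alpha> \<noteq> 0"
    using False by (simp add: \<alpha>_def)
  define \<zeta> where "\<zeta> = cnj \<alpha> / complex_of_real (sqrt 2 * cmod \<alpha>)"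
  define \<eta> where "\<eta> = \<alpha> / complex_of_real (sqrt 2 * cmod \<alpha>)"
  have "cmod \<zeta> = 1 / sqrt 2" "cmod \<eta> = 1 / sqrt 2"
    using \<alpha>0 by (simp_all add: \<zeta>_def \<eta>_def norm_divide norm_mult)
  then have unit: "(cmod \<zeta>)\<^sup>2 + (cmod \<eta>)\<^sup>2 \<le> 1"
    by (simp add: power_divide)
  have "cinner x (S x) = cnj \<alpha>"
    by (metis \<alpha>_def cinner_commute is_adjointD[OF assms(2)])
  then have "cinner x (scaleC \<zeta> (T x) + scaleC \<eta> (S x)) = \<zeta> * \<alpha> + \<eta> * cnj \<alpha>"
    by (simp add: cinner_add_right cinner_scaleC_right \<alpha>_def)
  also have "\<dots> = complex_of_real (2 * (cmod \<alpha>)\<^sup>2 / (sqrt 2 * cmod \<alpha>))"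
    by (simp add: \<zeta>_def \<eta>_def cnj_mult_self mult.commute[of \<alpha>] add_divide_distrib)
  also have "2 * (cmod \<alpha>)\<^sup>2 / (sqrt 2 * cmod \<alpha>) = sqrt 2 * cmod \<alpha>"
    using \<alpha>0 by (simp add: field_simps power2_eq_square)
  finally have "sqrt 2 * cmod \<alpha> = cmod (cinner x (scaleC \<zeta> (T x) + scaleC \<eta> (S x)))"
    by (simp del: of_real_mult)
  also have "\<dots> \<le> norm (scaleC \<zeta> (T x) + scaleC \<eta> (S x))"
    using cinner_Cauchy_Schwarz assms(3) by (metis mult_1)
  also have "\<dots> \<le> onorm (\<lambda>x. scaleC \<zeta> (T x) + scaleC \<eta> (S x))"
    using onorm[OF bounded_linear_adjoint_combination[OF assms(1,2)]] assms(3) by (metis mult_1_right)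
  also have "\<dots> \<le> dragomir_norm T S"
    by (rule onorm_adjoint_combination_le_dragomir_norm[OF assms(1,2) unit])
  finally show ?thesis
    by (simp add: \<alpha>_def)
qed

section \<open>Normal operators\<close>

lemma normal_adjoint_norm_eq:
  assumes "is_adjoint T S" "T \<circ> S = S \<circ> T"
  shows "norm (S x) = norm (T x)"
proof -
  have "cinner (S x) (S x) = cinner (S (T x)) x"
    using is_adjointD[OF assms(1), of "S x" x] fun_cong[OF assms(2), of x] by simp
  moreover have "cinner (T x) (T x) = cnj (cinner (S (T x)) x)"
    using is_adjointD[OF assms(1), of x "T x"] cinner_commute[of x "S (T x)"] by simp
  ultimately have "(norm (S x))\<^sup>2 = (norm (T x))\<^sup>2"
    by (simp add: power2_norm_eq_Re_cinner)
  then show ?thesis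
    by (simp add: power2_eq_iff_nonneg)
qed

lemma normal_power2_norm_le:
  assumes "is_adjoint T S" "T \<circ> S = S \<circ> T"
  shows "(norm (T x))\<^sup>2 \<le> norm x * norm (T (T x))"
proof -
  have "(norm (T x))\<^sup>2 = Re (cinner x (S (T x)))"
    by (simp add: power2_norm_eq_Re_cinner is_adjointD[OF assms(1)])
  also have "\<dots> \<le> norm x * norm (S (T x))"
    by (rule Re_cinner_le_norm)
  also have "norm (S (T x)) = norm (T (T x))"
    by (rule normal_adjoint_norm_eq[OF assms])
  finally show ?thesis .
qed

lemma log_convex_sequence_power_le:
  fixes a :: "nat \<Rightarrow> real"
  assumes nonneg: "\<And>k. 0 \<le> a k" and "a 0 = 1"
    and log_convex: "\<And>k. (a (Suc k))\<^sup>2 \<le> a k * a (Suc (Suc k))"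
  shows "a 1 ^ k \<le> a k"
proof -
  have growth: "a 1 * a k \<le> a (Suc k)" for k
  proof (induction k)
    case 0
    then show ?case
      using \<open>a 0 = 1\<close> by simp
  next
    case (Suc k)
    show ?case
    proof (cases "a k = 0")
      case True
      then have "a (Suc k) = 0"
        using log_convex[of k] by simp
      then show ?thesis
        using nonneg by simp
    next
      case False
      have "a k * (a 1 * a (Suc k)) \<le> a (Suc k) * a (Suc k)"
        using mult_right_mono[OF Suc.IH nonneg[of "Suc k"]] by (simp add: ac_simps)
      also have "\<dots> \<le> a k * a (Suc (Suc k))"
        using log_convex[of k] by (simp add: power2_eq_square)
      finally show ?thesis
        using False nonneg[of k] by simp
    qed
  qed
  show ?thesis
  proof (induction k)
    case (Suc k)
    have "a 1 ^ Suc k \<le> a 1 * a k"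
      using Suc.IH nonneg[of 1] by (simp add: mult_left_mono)
    also have "\<dots> \<le> a (Suc k)"
      by (rule growth)
    finally show ?case .
  qed (use \<open>a 0 = 1\<close> in simp)
qed

lemma normal_norm_funpow_ge:
  assumes "is_adjoint T S" "T \<circ> S = S \<circ> T" "norm y = 1"
  shows "norm (T y) ^ k \<le> norm ((T ^^ k) y)"
  using log_convex_sequence_power_le[of "\<lambda>k. norm ((T ^^ k) y)"]
    normal_power2_norm_le[OF assms(1,2)] assms(3)
  by simp

section \<open>Approximate eigenvalues of maximal modulus\<close>

lemma sum_powers_roots_unity_orthogonal:
  assumes "k < n" "l < n"
  defines "w \<equiv> cis (2 * pi / real n)"
  shows "(\<Sum>j<n. (cnj w ^ k * w ^ l) ^ j) = (if k = l then of_nat n else 0)"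
proof -
  define z where "z = cnj w ^ k * w ^ l"
  have w_power: "w ^ m = cis (2 * pi * real m / real n)" for m
    by (simp add: w_def Complex.DeMoivre mult.commute)
  have "cnj w * w = 1"
    by (simp add: cnj_mult_self w_def)
  have "z * w ^ k = (cnj w * w) ^ k * w ^ l"
    by (simp add: z_def power_mult_distrib ac_simps)
  then have z_rotates: "z * w ^ k = w ^ l"
    using \<open>cnj w * w = 1\<close> by simp
  have "w ^ n = 1"
    using assms(1) by (simp add: w_power)
  moreover have "cnj w ^ n = 1"
    by (metis \<open>w ^ n = 1\<close> complex_cnj_one complex_cnj_power)
  moreover have "z ^ n = (cnj w ^ n) ^ k * (w ^ n) ^ l"
    by (simp add: z_def power_mult_distrib flip: power_mult) (simp add: mult.commute)
  ultimately have "z ^ n = 1"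
    by simp
  show ?thesis
  proof (cases "k = l")
    case True
    then have "z = 1"
      using z_rotates by (simp add: w_def)
    then show ?thesis
      using True by (simp add: z_def)
  next
    case False
    have "inj_on (\<lambda>m. cis (2 * pi * real m / real n)) {..<n}"
      using Complex.bij_betw_roots_unity[of n] assms(1) by (simp add: bij_betw_def)
    then have "w ^ l \<noteq> w ^ k"
      using False assms(1,2) by (auto simp: w_power inj_on_def)
    then have "z \<noteq> 1"
      using z_rotates by auto
    then show ?thesis
      using False \<open>z ^ n = 1\<close> by (simp add: z_def sum_gp_strict)
  qed
qed

lemma sum_power2_norm_roots_unity_combination:
  fixes u :: "nat \<Rightarrow> 'a::complex_inner" and n :: nat
  defines "w \<equiv> cis (2 * pi / real n)"
  shows "(\<Sum>j<n. (norm (\<Sum>k<n. scaleC ((w ^ j) ^ k) (u k)))\<^sup>2)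
    = real n * (\<Sum>k<n. (norm (u k))\<^sup>2)"
proof -
  define c where "c k l = cinner (u k) (u l)" for k l
  have "cinner (\<Sum>k<n. scaleC (a k) (u k)) (\<Sum>l<n. scaleC (a l) (u l))
      = (\<Sum>k<n. \<Sum>l<n. cnj (a k) * a l * c k l)" for a :: "nat \<Rightarrow> complex"
    by (simp add: Modules.additive.sum[OF additive_cinner_left]
        Modules.additive.sum[OF additive_cinner_right] cinner_scaleC_left cinner_scaleC_right
        c_def sum_distrib_left mult.assoc) (subst sum.swap, simp add: ac_simps)
  moreover have "cnj ((w ^ j) ^ k) * (w ^ j) ^ l = (cnj w ^ k * w ^ l) ^ j" for j k l
    by (simp add: power_mult_distrib flip: power_mult) (simp add: mult.commute)
  ultimately have "(\<Sum>j<n. (norm (\<Sum>k<n. scaleC ((w ^ j) ^ k) (u k)))\<^sup>2)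
      = Re (\<Sum>j<n. \<Sum>k<n. \<Sum>l<n. (cnj w ^ k * w ^ l) ^ j * c k l)"
    by (simp add: power2_norm_eq_Re_cinner Re_sum)
  also have "(\<Sum>j<n. \<Sum>k<n. \<Sum>l<n. (cnj w ^ k * w ^ l) ^ j * c k l)
      = (\<Sum>k<n. \<Sum>j<n. \<Sum>l<n. (cnj w ^ k * w ^ l) ^ j * c k l)"
    by (rule sum.swap)
  also have "\<dots> = (\<Sum>k<n. \<Sum>l<n. \<Sum>j<n. (cnj w ^ k * w ^ l) ^ j * c k l)"
    by (rule sum.cong[OF refl], rule sum.swap)
  also have "\<dots> = (\<Sum>k<n. \<Sum>l<n. (\<Sum>j<n. (cnj w ^ k * w ^ l) ^ j) * c k l)"
    by (simp add: sum_distrib_right)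
  also have "\<dots> = (\<Sum>k<n. \<Sum>l<n. if k = l then of_nat n * c k l else 0)"
    by (intro sum.cong refl) (simp add: sum_powers_roots_unity_orthogonal w_def)
  also have "\<dots> = (\<Sum>k<n. of_nat n * c k k)"
    by simp
  finally show ?thesis
    by (simp add: Re_sum c_def cinner_self_eq_norm_square sum_distrib_left)
qed

lemma exists_unimodular_combination_norm_ge:
  fixes u :: "nat \<Rightarrow> 'a::complex_inner"
  assumes "0 < n"
  shows "\<exists>d. cmod d = 1 \<and> (\<Sum>k<n. (norm (u k))\<^sup>2) \<le> (norm (\<Sum>k<n. scaleC (d ^ k) (u k)))\<^sup>2"
proof (rule ccontr)
  define w where "w = cis (2 * pi / real n)"
  assume "\<not> ?thesis"
  moreover have "cmod (w ^ j) = 1" for j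
    by (simp add: w_def norm_power)
  ultimately have "(norm (\<Sum>k<n. scaleC ((w ^ j) ^ k) (u k)))\<^sup>2 < (\<Sum>k<n. (norm (u k))\<^sup>2)" for j
    by (meson not_le)
  then have "(\<Sum>j<n. (norm (\<Sum>k<n. scaleC ((w ^ j) ^ k) (u k)))\<^sup>2)
      < (\<Sum>j<n. \<Sum>k<n. (norm (u k))\<^sup>2)"
    using assms by (intro sum_strict_mono) auto
  then show False
    by (simp add: sum_power2_norm_roots_unity_combination w_def)
qed

lemma chain_combination_telescopes:
  fixes T :: "'a::complex_inner \<Rightarrow> 'a" and u :: "nat \<Rightarrow> 'a" and d :: complex and n :: nat
  assumes T: "bounded_clinear T" and chain: "\<And>k. T (u k) = scaleC m (u (Suc k))"
    and "cnj d * d = 1"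
  defines "v \<equiv> \<Sum>k<n. scaleC (d ^ k) (u k)"
  shows "T v - scaleC (m * cnj d) v = scaleC (m * cnj d) (scaleC (d ^ n) (u n) - u 0)"
proof -
  define f where "f k = scaleC (d ^ k) (u k)" for k
  have "scaleC (d ^ k) (T (u k)) = scaleC (m * cnj d) (f (Suc k))" for k
  proof -
    have "d ^ k * m = m * cnj d * d ^ Suc k"
      using \<open>cnj d * d = 1\<close> by (simp add: ac_simps)
    then show ?thesis
      by (simp only: chain f_def scaleC_scaleC)
  qed
  then have "T v = scaleC (m * cnj d) (\<Sum>k<n. f (Suc k))"
    by (simp add: v_def Modules.additive.sum[OF bounded_clinear_additive[OF T]]
        bounded_clinear_scaleC[OF T] Modules.additive.sum[OF additive_scaleC_right])
  then have "T v - scaleC (m * cnj d) v = scaleC (m * cnj d) (\<Sum>k<n. f (Suc k) - f k)"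
    by (simp add: v_def f_def sum_subtractf Modules.additive.diff[OF additive_scaleC_right])
  also have "(\<Sum>k<n. f (Suc k) - f k) = scaleC (d ^ n) (u n) - u 0"
    unfolding sum_lessThan_telescope by (simp add: f_def scaleC_one)
  finally show ?thesis .
qed

lemma exists_unit_vector_eigen_defect:
  fixes T :: "'a::complex_inner \<Rightarrow> 'a"
  assumes "bounded_clinear T" "v \<noteq> 0"
  shows "\<exists>x. norm x = 1 \<and> norm (T x - scaleC c x) = norm (T v - scaleC c v) / norm v"
proof -
  define x where "x = scaleC (complex_of_real (1 / norm v)) v"
  have "T x - scaleC c x = scaleC (complex_of_real (1 / norm v)) (T v - scaleC c v)"
    by (simp add: x_def bounded_clinear_scaleC[OF assms(1)] scaleC_scaleC mult.commute
        Modules.additive.diff[OF additive_scaleC_right])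
  then show ?thesis
    using assms(2) by (intro exI[of _ x]) (simp add: x_def norm_scaleC norm_divide)
qed

lemma approx_eigenvector_from_chain:
  fixes T :: "'a::complex_inner \<Rightarrow> 'a"
  assumes T: "bounded_clinear T" and "0 < n" and chain: "\<And>k. T (u k) = scaleC m (u (Suc k))"
    and upper: "\<And>k. norm (u k) \<le> 1"
    and lower: "\<And>k. k < n \<Longrightarrow> 1 / 2 \<le> norm (u k)"
  shows "\<exists>x d. norm x = 1 \<and> cmod d = 1 \<and> norm (T x - scaleC (m * cnj d) x) \<le> 4 * cmod m / sqrt n"
proof -
  obtain d where d: "cmod d = 1"
    and large: "(\<Sum>k<n. (norm (u k))\<^sup>2) \<le> (norm (\<Sum>k<n. scaleC (d ^ k) (u k)))\<^sup>2"
    using exists_unimodular_combination_norm_ge[OF \<open>0 < n\<close>] by blast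
  define v where "v = (\<Sum>k<n. scaleC (d ^ k) (u k))"
  define c where "c = m * cnj d"
  have "(\<Sum>k<n. (1 / 2)\<^sup>2) \<le> (\<Sum>k<n. (norm (u k))\<^sup>2)"
    using lower by (intro sum_mono power_mono) auto
  with large have "(sqrt n / 2)\<^sup>2 \<le> (norm v)\<^sup>2"
    by (simp add: v_def power_divide)
  then have v_large: "sqrt n / 2 \<le> norm v"
    by (rule power2_le_imp_le) simp
  moreover have "0 < sqrt n / 2"
    using \<open>0 < n\<close> by simp
  ultimately have "v \<noteq> 0"
    by auto
  have "cnj d * d = 1"
    using d by (simp add: cnj_mult_self)
  then have "T v - scaleC c v = scaleC c (scaleC (d ^ n) (u n) - u 0)"
    unfolding c_def v_def by (rule chain_combination_telescopes[where u = u, OF T chain])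
  then have "norm (T v - scaleC c v) = cmod m * norm (scaleC (d ^ n) (u n) - u 0)"
    by (simp add: c_def norm_scaleC norm_mult d)
  also have "\<dots> \<le> cmod m * 2"
    using norm_triangle_ineq4[of "scaleC (d ^ n) (u n)" "u 0"] upper[of n] upper[of 0]
    by (intro mult_left_mono) (auto simp: norm_scaleC norm_power d)
  finally have "norm (T v - scaleC c v) / norm v \<le> cmod m * 2 / (sqrt n / 2)"
    using v_large \<open>0 < sqrt n / 2\<close> by (intro frac_le) auto
  moreover obtain x where "norm x = 1" "norm (T x - scaleC c x) = norm (T v - scaleC c v) / norm v"
    using exists_unit_vector_eigen_defect[OF T \<open>v \<noteq> 0\<close>] by blast
  ultimately show ?thesis
    using d by (intro exI[of _ x] exI[of _ d]) (simp add: c_def)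
qed

lemma normal_normalized_powers:
  fixes T S :: "'a::complex_inner \<Rightarrow> 'a"
  assumes T: "bounded_clinear T" and adj: "is_adjoint T S" and normal: "T \<circ> S = S \<circ> T"
    and "0 < onorm T" and y: "norm y = 1" "onorm T * (1 - \<delta>) \<le> norm (T y)"
    and "0 \<le> \<delta>" "\<delta> \<le> 1"
  defines "u k \<equiv> scaleC (complex_of_real (1 / onorm T ^ k)) ((T ^^ k) y)"
  shows "T (u k) = scaleC (complex_of_real (onorm T)) (u (Suc k))"
    and "norm (u k) \<le> 1"
    and "1 - real k * \<delta> \<le> norm (u k)"
proof -
  define M where "M = onorm T"
  have "0 < M"
    using \<open>0 < onorm T\<close> by (simp add: M_def)
  have norm_u: "norm (u k) = norm ((T ^^ k) y) / M ^ k"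
    using \<open>0 < M\<close> by (simp add: u_def M_def norm_scaleC norm_divide norm_power)
  show "T (u k) = scaleC (complex_of_real (onorm T)) (u (Suc k))"
    using \<open>0 < onorm T\<close> by (simp add: u_def bounded_clinear_scaleC[OF T] scaleC_scaleC)
  show "norm (u k) \<le> 1"
    using norm_funpow_le[OF bounded_clinear_imp_bounded_linear[OF T], of k y] \<open>0 < M\<close> y(1)
    by (simp add: norm_u M_def)
  have "1 - real k * \<delta> \<le> (1 - \<delta>) ^ k"
    using Bernoulli_inequality[of "- \<delta>" k] \<open>\<delta> \<le> 1\<close> by simp
  also have "(1 - \<delta>) ^ k * M ^ k \<le> norm (T y) ^ k"
    using y(2) \<open>\<delta> \<le> 1\<close> \<open>0 < M\<close>
    by (simp flip: power_mult_distrib) (intro power_mono; simp add: M_def ac_simps)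
  then have "(1 - \<delta>) ^ k \<le> norm (u k)"
    using normal_norm_funpow_ge[OF adj normal y(1), of k] \<open>0 < M\<close>
    by (simp add: norm_u pos_le_divide_eq)
  finally show "1 - real k * \<delta> \<le> norm (u k)" .
qed

lemma normal_approx_eigenvalue:
  fixes T S :: "'a::complex_inner \<Rightarrow> 'a"
  assumes T: "bounded_clinear T" and adj: "is_adjoint T S" and normal: "T \<circ> S = S \<circ> T"
    and "0 < onorm T" "0 < e"
  shows "\<exists>x c. norm x = 1 \<and> cmod c = onorm T \<and> norm (T x - scaleC c x) \<le> e"
proof -
  define n :: nat where "n = nat \<lceil>(4 * onorm T / e)\<^sup>2\<rceil> + 1"
  have "0 < n"
    by (simp add: n_def)
  have "4 * onorm T / e \<le> sqrt n"
    by (rule real_le_rsqrt) (simp add: n_def, linarith)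
  then have small: "4 * onorm T / sqrt n \<le> e"
    using \<open>0 < e\<close> \<open>0 < n\<close> by (simp add: field_simps)
  define \<delta> where "\<delta> = 1 / (2 * real n)"
  have \<delta>: "0 < \<delta>" "\<delta> \<le> 1" "real n * \<delta> = 1 / 2"
    using \<open>0 < n\<close> by (auto simp: \<delta>_def field_simps)
  obtain y where y: "norm y = 1" "onorm T * (1 - \<delta>) < norm (T y)"
    using onorm_approx_by_unit_vector[OF bounded_clinear_imp_bounded_linear[OF T],
        of "onorm T * (1 - \<delta>)"] \<open>0 < onorm T\<close> \<delta> by auto
  let ?u = "\<lambda>k. scaleC (complex_of_real (1 / onorm T ^ k)) ((T ^^ k) y)"
  note powers = normal_normalized_powers[OF T adj normal \<open>0 < onorm T\<close> y(1) less_imp_le[OF y(2)]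
      less_imp_le[OF \<delta>(1)] \<delta>(2)]
  have "1 / 2 \<le> norm (?u k)" if "k < n" for k
  proof -
    have "real k * \<delta> \<le> real n * \<delta>"
      using \<delta> \<open>k < n\<close> by (intro mult_right_mono) auto
    then show ?thesis
      using powers(3)[of k] \<delta>(3) by linarith
  qed
  then obtain x d where "norm x = 1" "cmod d = 1"
    and "norm (T x - scaleC (complex_of_real (onorm T) * cnj d) x) \<le> 4 * onorm T / sqrt n"
    using approx_eigenvector_from_chain[where u = ?u, OF T \<open>0 < n\<close> powers(1,2)] \<open>0 < onorm T\<close>
    by auto
  then show ?thesis
    using \<open>0 < onorm T\<close> small
    by (intro exI[of _ x] exI[of _ "complex_of_real (onorm T) * cnj d"]) (simp add: norm_mult)
qed

lemma normal_numerical_radius_approx: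
  fixes T S :: "'a::complex_inner \<Rightarrow> 'a"
  assumes "bounded_clinear T" "is_adjoint T S" "T \<circ> S = S \<circ> T" "0 < onorm T" "0 < e"
  shows "\<exists>x. norm x = 1 \<and> onorm T - e \<le> cmod (cinner x (T x))"
proof -
  obtain x c where x: "norm x = 1" "cmod c = onorm T" "norm (T x - scaleC c x) \<le> e"
    using normal_approx_eigenvalue[OF assms] by blast
  have "c = cinner x (T x) - cinner x (T x - scaleC c x)"
    using x(1) by (simp add: Modules.additive.diff[OF additive_cinner_right] cinner_scaleC_right
        cinner_self_eq_norm_square)
  then have "cmod c \<le> cmod (cinner x (T x)) + cmod (cinner x (T x - scaleC c x))"
    by (metis norm_triangle_ineq4)
  also have "cmod (cinner x (T x - scaleC c x)) \<le> e"
    using cinner_Cauchy_Schwarz[of x "T x - scaleC c x"] x(1,3) by simp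
  finally show ?thesis
    using x(1,2) by (intro exI[of _ x]) simp
qed

lemma normal_dragomir_norm_ge:
  fixes T S :: "'a::complex_inner \<Rightarrow> 'a"
  assumes "bounded_clinear T" "is_adjoint T S" "T \<circ> S = S \<circ> T" "0 < onorm T"
  shows "sqrt 2 * onorm T \<le> dragomir_norm T S"
proof (rule field_le_epsilon)
  fix e :: real
  assume "0 < e"
  then obtain x where "norm x = 1" and "onorm T - e / sqrt 2 \<le> cmod (cinner x (T x))"
    using normal_numerical_radius_approx[OF assms, of "e / sqrt 2"] by auto
  then have "sqrt 2 * onorm T - e \<le> sqrt 2 * cmod (cinner x (T x))"
    using mult_left_mono[of _ _ "sqrt 2"] by (fastforce simp: right_diff_distrib)
  also have "\<dots> \<le> dragomir_norm T S"
    by (rule cinner_le_dragomir_norm[OF assms(1,2) \<open>norm x = 1\<close>])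
  finally show "sqrt 2 * onorm T \<le> dragomir_norm T S + e"
    by simp
qed

theorem corollary3p5:
  fixes T S :: "'a::chilbert_space \<Rightarrow> 'a"
  assumes "bounded_clinear T"
    and "is_adjoint T S"
    and "T \<circ> S = S \<circ> T"
  shows "dragomir_norm T S = sqrt 2 * onorm T"
proof (rule antisym)
  show "dragomir_norm T S \<le> sqrt 2 * onorm T"
    by (rule dragomir_norm_le[OF assms(1,2)])
  have "0 \<le> onorm T"
    by (rule onorm_pos_le[OF bounded_clinear_imp_bounded_linear[OF assms(1)]])
  then show "sqrt 2 * onorm T \<le> dragomir_norm T S"
    using dragomir_norm_nonneg[OF assms(1,2)] normal_dragomir_norm_ge[OF assms]
    by (cases "onorm T = 0") auto
qed

end
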